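(* Let $V_-=\{(u,v)\in\mathbb R_+^2:v\le 2pu/\beta\}$ and suppose $X:[0,T]\to\mathbb R^2$ is $C^1$, satisfies Condition I, and $X(0)\in V_-^o$ (the interior). Let $A_L,A_U$ start from $X(0)$. Then: (1) $X(t)\ge A_L(t)$ componentwise for every $t\le\tau^L_{V_-^c}\wedge\tau_{V_-^c}$, and $X(t)\le A_U(t)$ componentwise for every $t\le\tau^U_{V_-^c}\wedge\tau_{V_-^c}$; (2) if $\tau^\square_B$ denotes the hitting time of $B$ by the curve $(A_L^1(t),A_U^2(t))$, then $A_L(t)\le X(t)\le A_U(t)$ componentwise for every $t\le\tau^\square_{V_-^c}$. In particular, if $\tau^\square_{V_-^c}=\infty$ then $A_L(t)\le X(t)\le A_U(t)$ for all $t\in[0,T]$.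
   Context: Fix an integer $p\ge3$, $\beta>0$, $\Lambda_p>0$. $\mathcal F_1(u,v)=-pu+\beta v$, $\mathcal F_2^L(u,v)=2p(p-1)-2(p-1)v+2pu(pu-\beta v)-2\beta\Lambda_pv$, $\mathcal F_2^U$ the same with $+2\beta\Lambda_pv$. $A_L$ (resp. $A_U$) solves $\dot A=(\mathcal F_1,\mathcal F_2^L)(A)$ (resp. $(\mathcal F_1,\mathcal F_2^U)(A)$). Hitting times: $\tau_B=\inf\{t\ge0:X(t)\in B\}$, $\tau^L_B$, $\tau^U_B$ the analogues for $A_L,A_U$. Condition I: $\dot X_1=\mathcal F_1(X)$ and $\mathcal F_2^L(X)\le\dot X_2\le\mathcal F_2^U(X)$ on $[0,T]$. *)

theory Defs
  imports "HOL-Analysis.Analysis"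
begin

definition F1 :: "nat \<Rightarrow> real \<Rightarrow> real \<times> real \<Rightarrow> real" where
  "F1 p \<beta> x = - real p * fst x + \<beta> * snd x"

definition F2L :: "nat \<Rightarrow> real \<Rightarrow> real \<Rightarrow> real \<times> real \<Rightarrow> real" where
  "F2L p \<beta> \<Lambda> x = 2 * real p * (real p - 1) - 2 * (real p - 1) * snd x
     + 2 * real p * fst x * (real p * fst x - \<beta> * snd x) - 2 * \<beta> * \<Lambda> * snd x"

definition F2U :: "nat \<Rightarrow> real \<Rightarrow> real \<Rightarrow> real \<times> real \<Rightarrow> real" where
  "F2U p \<beta> \<Lambda> x = 2 * real p * (real p - 1) - 2 * (real p - 1) * snd x
     + 2 * real p * fst x * (real p * fst x - \<beta> * snd x) + 2 * \<beta> * \<Lambda> * snd x"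

definition Vminus :: "nat \<Rightarrow> real \<Rightarrow> (real \<times> real) set" where
  "Vminus p \<beta> = {(u, v). 0 \<le> u \<and> 0 \<le> v \<and> v \<le> 2 * real p * u / \<beta>}"

text \<open>Hitting time of B by a curve Y observed on [0,T]; infinity if never hit.\<close>
definition hit_time :: "(real \<Rightarrow> 'a) \<Rightarrow> 'a set \<Rightarrow> real \<Rightarrow> ereal" where
  "hit_time Y B T = Inf {ereal t | t. t \<in> {0..T} \<and> Y t \<in> B}"

end

theory Submission
  imports Defs
begin

text \<open>The gaps \<open>X - A_L\<close> and \<open>A_U - X\<close> satisfy a cooperative differential inequality: the first
  component is driven by the second with coefficient \<open>\<beta> > 0\<close>, and the second by the first with
  coefficient \<open>2p(p(u\<^sub>1 + u\<^sub>0) - \<beta>v)\<close>, which is nonnegative up to a multiple of the gap as long as the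
  point providing \<open>v\<close> satisfies \<open>\<beta>v \<le> 2pu\<close>, i.e. lies in \<open>V_-\<close>. A Kamke-type argument then keeps all gaps
  nonnegative: after adding \<open>\<epsilon> e\<^sup>K\<^sup>t\<close> every gap is positive, at the first time one of them vanishes its
  derivative is positive, which is absurd, and \<open>\<epsilon> \<rightarrow> 0\<close> gives the claim. For part (2) the four gaps are
  treated together, so that only the corner \<open>(A_L\<^sup>1, A_U\<^sup>2)\<close> needs to stay in \<open>V_-\<close>.\<close>

lemma mem_closed_at_right_endpoint:
  fixes f :: "real \<Rightarrow> 'a::topological_space"
  assumes "0 < t" and "continuous_on {0..t} f" and "closed S"
    and "\<And>r. r \<in> {0..<t} \<Longrightarrow> f r \<in> S"
  shows "f t \<in> S"
proof -
  have "closed ({0..t} \<inter> f -` S)"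
    using assms(2,3) by (intro continuous_closed_preimage) auto
  then have "closure {0..<t} \<subseteq> {0..t} \<inter> f -` S"
    using assms(4) by (intro closure_minimal) auto
  moreover have "t \<in> closure {0..<t}"
    using assms(1) by simp
  ultimately show ?thesis
    by blast
qed

lemma componentwise_pos_preserved:
  fixes z z' :: "'i \<Rightarrow> real \<Rightarrow> real"
  assumes "finite I" and "0 \<le> S"
    and deriv: "\<And>i s. i \<in> I \<Longrightarrow> s \<in> {0..S} \<Longrightarrow> (z i has_real_derivative z' i s) (at s within {0..S})"
    and init: "\<And>i. i \<in> I \<Longrightarrow> 0 < z i 0"
    and inward: "\<And>s i. s \<in> {0<..S} \<Longrightarrow> i \<in> I \<Longrightarrow> \<forall>j\<in>I. 0 \<le> z j s \<Longrightarrow> z i s = 0 \<Longrightarrow> 0 < z' i s"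
  shows "\<forall>i\<in>I. \<forall>t\<in>{0..S}. 0 < z i t"
proof (rule ccontr)
  assume not_pos: "\<not> ?thesis"
  define C where "C = {t \<in> {0..S}. \<exists>i\<in>I. z i t \<le> 0}"
  have cont: "continuous_on {0..S} (z i)" if "i \<in> I" for i
    using deriv[OF that] by (meson DERIV_continuous continuous_on_eq_continuous_within)
  have "C = (\<Union>i\<in>I. {0..S} \<inter> z i -` {..0})"
    unfolding C_def by auto
  then have "closed C"
    using \<open>finite I\<close> cont by (simp only:) (intro closed_UN ballI continuous_closed_preimage; simp)
  moreover have "C \<noteq> {}" and "bdd_below C"
    using not_pos unfolding C_def by (force, auto intro: bdd_belowI[of _ 0])
  ultimately have sC: "Inf C \<in> C"
    by (rule closed_contains_Inf[rotated -1])
  define s where "s = Inf C"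
  have before: "\<forall>j\<in>I. 0 < z j r" if "r \<in> {0..S}" and "r < s" for r
  proof -
    have "r \<notin> C"
      using that \<open>bdd_below C\<close> cInf_lower unfolding s_def by force
    then show ?thesis
      using that(1) unfolding C_def by force
  qed
  have "s \<noteq> 0"
    using sC init unfolding C_def s_def by force
  then have s: "0 < s" "s \<le> S"
    using sC unfolding C_def s_def by auto
  have nonneg: "\<forall>j\<in>I. 0 \<le> z j s"
  proof
    fix j assume "j \<in> I"
    have "z j s \<in> {0..}"
    proof (rule mem_closed_at_right_endpoint[OF \<open>0 < s\<close>])
      show "continuous_on {0..s} (z j)"
        using cont[OF \<open>j \<in> I\<close>] by (rule continuous_on_subset) (use s(2) in auto)
      show "\<And>r. r \<in> {0..<s} \<Longrightarrow> z j r \<in> {0..}"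
        using before \<open>j \<in> I\<close> s(2) by (auto intro: less_imp_le)
    qed simp
    then show "0 \<le> z j s" by simp
  qed
  obtain i where i: "i \<in> I" "z i s = 0"
    using sC nonneg unfolding C_def s_def by force
  have "0 < z' i s"
    using s by (intro inward[OF _ i(1) nonneg i(2)]) auto
  moreover have "s \<in> {0..S}"
    using s by auto
  ultimately obtain e where "0 < e"
    and e: "\<And>h. 0 < h \<Longrightarrow> s - h \<in> {0..S} \<Longrightarrow> h < e \<Longrightarrow> z i (s - h) < z i s"
    using has_real_derivative_pos_inc_left[OF deriv[OF i(1)]] by blast
  define h where "h = min (e/2) (s/2)"
  have h: "0 < h" "s - h \<in> {0..S}" "h < e" "s - h < s"
    using \<open>0 < e\<close> s unfolding h_def by auto
  have "z i (s - h) < 0"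
    using e[OF h(1-3)] i(2) by simp
  moreover have "0 < z i (s - h)"
    using before[OF h(2,4)] i(1) by blast
  ultimately show False
    by simp
qed

lemma componentwise_nonneg_preserved:
  fixes w w' :: "'i \<Rightarrow> real \<Rightarrow> real"
  assumes "finite I" and "0 \<le> S"
    and deriv: "\<And>i s. i \<in> I \<Longrightarrow> s \<in> {0..S} \<Longrightarrow> (w i has_real_derivative w' i s) (at s within {0..S})"
    and init: "\<And>i. i \<in> I \<Longrightarrow> 0 \<le> w i 0"
    and inward: "\<And>d s i. 0 < d \<Longrightarrow> s \<in> {0<..S} \<Longrightarrow> i \<in> I \<Longrightarrow> \<forall>j\<in>I. -d \<le> w j s \<Longrightarrow> w i s = -d
                  \<Longrightarrow> 0 < w' i s + K * d"
  shows "\<forall>i\<in>I. \<forall>t\<in>{0..S}. 0 \<le> w i t"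
proof (intro ballI)
  fix i t assume "i \<in> I" and "t \<in> {0..S}"
  \<comment> \<open>The perturbation \<open>e * exp (K * t)\<close> turns the weak inward condition into a strict one.\<close>
  have perturbed: "- (e * exp (K * t)) < w i t" if "0 < e" for e
  proof -
    have "\<forall>i\<in>I. \<forall>t\<in>{0..S}. 0 < w i t + e * exp (K * t)"
    proof (rule componentwise_pos_preserved[OF \<open>finite I\<close> \<open>0 \<le> S\<close>])
      show "((\<lambda>r. w i r + e * exp (K * r)) has_real_derivative w' i s + e * (K * exp (K * s)))
          (at s within {0..S})" if "i \<in> I" "s \<in> {0..S}" for i s
        using deriv[OF that] by (auto intro!: derivative_eq_intros)
      show "0 < w i 0 + e * exp (K * 0)" if "i \<in> I" for i
        using init[OF that] \<open>0 < e\<close> by simp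
    next
      fix s i assume s: "s \<in> {0<..S}" and "i \<in> I"
        and nonneg: "\<forall>j\<in>I. 0 \<le> w j s + e * exp (K * s)" and zero: "w i s + e * exp (K * s) = 0"
      have "0 < w' i s + K * (e * exp (K * s))"
        using nonneg zero \<open>0 < e\<close> by (intro inward[OF _ s \<open>i \<in> I\<close>]) (auto simp: algebra_simps)
      then show "0 < w' i s + e * (K * exp (K * s))"
        by (simp add: algebra_simps)
    qed
    then show ?thesis
      using \<open>i \<in> I\<close> \<open>t \<in> {0..S}\<close> by force
  qed
  show "0 \<le> w i t"
  proof (rule ccontr)
    assume "\<not> 0 \<le> w i t"
    then have "0 < - w i t / exp (K * t)"
      by (simp add: divide_neg_pos)
    from perturbed[OF this] show False
      by simp
  qed
qed

lemma has_vector_derivative_inner_const: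
  "(f has_vector_derivative f') F \<Longrightarrow> ((\<lambda>t. f t \<bullet> b) has_real_derivative f' \<bullet> b) F"
  unfolding has_real_derivative_iff_has_vector_derivative
  by (rule bounded_linear.has_vector_derivative[OF bounded_linear_inner_left])

lemma has_real_derivative_component_within:
  assumes "\<And>s. s \<in> {0..T} \<Longrightarrow> (f has_vector_derivative f' s) (at s within {0..T})"
    and "t \<le> T" and "s \<in> {0..t}"
  shows "((\<lambda>r. f r \<bullet> b) has_real_derivative f' s \<bullet> b) (at s within {0..t})"
proof -
  have "(f has_vector_derivative f' s) (at s within {0..T})"
    using assms by auto
  then show ?thesis
    by (rule has_vector_derivative_inner_const[OF has_vector_derivative_within_subset]) (use assms(2) in auto)
qed

lemma has_vector_derivative_imp_continuous_on:
  "(\<And>t. t \<in> {a..b} \<Longrightarrow> (Y has_vector_derivative Y' t) (at t within {a..b})) \<Longrightarrow> continuous_on {a..b} Y"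
  using has_vector_derivative_continuous continuous_on_eq_continuous_within by blast

lemma mem_before_hit_time:
  assumes "continuous_on {0..T} Y" and "closed V" and "Y 0 \<in> V"
    and "t \<in> {0..T}" and "ereal t \<le> hit_time Y (- V) T" and "s \<in> {0..t}"
  shows "Y s \<in> V"
proof -
  have before: "Y r \<in> V" if "r \<in> {0..<t}" for r
  proof (rule ccontr)
    assume "Y r \<notin> V"
    then have "hit_time Y (- V) T \<le> ereal r"
      unfolding hit_time_def using that \<open>t \<in> {0..T}\<close> by (intro Inf_lower) auto
    then have "ereal t \<le> ereal r"
      using \<open>ereal t \<le> hit_time Y (- V) T\<close> by (rule order_trans[rotated])
    then show False
      using that by simp
  qed
  consider "s < t" | "s = t" "t = 0" | "s = t" "0 < t"
    using \<open>s \<in> {0..t}\<close> by fastforce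
  then show ?thesis
  proof cases
    case 3
    have "continuous_on {0..t} Y"
      using assms(1) by (rule continuous_on_subset) (use \<open>t \<in> {0..T}\<close> in auto)
    with \<open>0 < t\<close> show ?thesis
      using mem_closed_at_right_endpoint before \<open>closed V\<close> \<open>s = t\<close> by blast
  qed (use before \<open>s \<in> {0..t}\<close> \<open>Y 0 \<in> V\<close> in auto)
qed

lemma rate_pos_at_boundary:
  fixes a b u c M A B d K D :: real
  assumes "a * u + b * (-d) \<le> D" and "-d \<le> u" and "u \<le> M" and "- (c * d) \<le> a"
    and "\<bar>a\<bar> \<le> A" and "\<bar>b\<bar> \<le> B" and "0 < d" and "0 \<le> c" and "0 \<le> M" and "c * M + A + B < K"
  shows "0 < D + K * d"
proof -
  have au: "- ((c * M + A) * d) \<le> a * u"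
  proof (cases "0 \<le> u")
    case True
    have "0 \<le> A * d"
      using assms by (intro mult_nonneg_nonneg) auto
    then have "- ((c * M + A) * d) \<le> - (c * d * M)"
      by (simp add: algebra_simps)
    also have "\<dots> \<le> - (c * d) * u"
      using assms True by (simp add: mult_left_mono)
    also have "\<dots> \<le> a * u"
      using assms(4) True by (rule mult_right_mono)
    finally show ?thesis .
  next
    case False
    have "\<bar>a * u\<bar> \<le> A * d"
      unfolding abs_mult using assms False by (intro mult_mono) auto
    moreover have "0 \<le> c * M * d"
      using assms by simp
    ultimately show ?thesis
      by (simp add: algebra_simps)
  qed
  have "b * d \<le> B * d"
    using assms by (intro mult_right_mono) auto
  moreover have "(c * M + A + B) * d < K * d"
    using assms by simp
  ultimately show ?thesis
    using assms(1) au by (simp add: algebra_simps)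
qed

lemma F2U_eq_F2L_neg: "F2U p \<beta> \<Lambda> = F2L p \<beta> (- \<Lambda>)"
  unfolding F2U_def F2L_def by (simp add: fun_eq_iff)

lemma F2L_diff:
  assumes "v = snd y \<and> u = fst z \<or> v = snd z \<and> u = fst y"
  shows "F2L p \<beta> \<Lambda> z - F2L p \<beta> \<Lambda> y =
     2 * real p * (real p * (fst z + fst y) - \<beta> * v) * (fst z - fst y)
     + (- 2 * (real p * \<beta> * u + (real p - 1) + \<beta> * \<Lambda>)) * (snd z - snd y)"
  using assms unfolding F2L_def by (auto simp: algebra_simps)

text \<open>A one-sided Lipschitz constant of the vector field on states with coordinates bounded by \<open>R\<close>, for a
  cross-coupling coefficient bounded below by \<open>-2 p k d\<close> at gap \<open>d\<close>.\<close>
definition gap_rate :: "nat \<Rightarrow> real \<Rightarrow> real \<Rightarrow> real \<Rightarrow> real \<Rightarrow> real" where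
  "gap_rate p \<beta> R k L =
     2 * real p * k * (2 * R) + (2 * real p * (2 * real p + \<beta>) * R + \<beta>)
     + (2 * real p * \<beta> * R + 2 * \<beta> * L + 3 * real p + 2)"

lemma F1_gap_rate:
  assumes "fst z - fst y = -d" and "-d \<le> snd z - snd y" and "\<bar>snd y\<bar> \<le> R" and "\<bar>snd z\<bar> \<le> R"
    and "0 < d" and "0 \<le> \<beta>" and "0 \<le> k" and "0 \<le> L" and "gap_rate p \<beta> R k L < K"
  shows "0 < F1 p \<beta> z - F1 p \<beta> y + K * d"
proof (rule rate_pos_at_boundary)
  have "real p * (fst z - fst y) = - (real p * d)"
    using assms(1) by simp
  then show "\<beta> * (snd z - snd y) + (- real p) * (-d) \<le> F1 p \<beta> z - F1 p \<beta> y"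
    unfolding F1_def by (simp add: algebra_simps)
  show "2 * real p * k * (2 * R) + (2 * real p * (2 * real p + \<beta>) * R + \<beta>)
      + (2 * real p * \<beta> * R + 2 * \<beta> * L + 3 * real p + 2) < K"
    using assms(9) unfolding gap_rate_def .
  have "0 \<le> 2 * real p * k * d"
    using assms(5,7) by simp
  then show "- (2 * real p * k * d) \<le> \<beta>"
    using assms(6) by linarith
qed (use assms in auto)

lemma F2L_gap_rate:
  assumes D: "F2L p \<beta> \<Lambda> z - F2L p \<beta> \<Lambda> y \<le> D"
    and gaps: "-d \<le> fst z - fst y" "snd z - snd y = -d"
    and bounds: "\<bar>fst y\<bar> \<le> R" "\<bar>fst z\<bar> \<le> R" "\<bar>v\<bar> \<le> R" and v: "v = snd y \<or> v = snd z"
    and coeff: "- (k * d) \<le> p * (fst z + fst y) - \<beta> * v"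
    and "0 < d" and "0 \<le> \<beta>" and "0 \<le> k" and "\<bar>\<Lambda>\<bar> \<le> L" and K: "gap_rate p \<beta> R k L < K"
  shows "0 < D + K * d"
proof -
  \<comment> \<open>Splitting \<open>u v\<close> in two ways lets the mixed coefficient use whichever \<open>v\<close> is controlled.\<close>
  obtain u where "\<bar>u\<bar> \<le> R" and "v = snd y \<and> u = fst z \<or> v = snd z \<and> u = fst y"
    using v bounds by blast
  note diff = F2L_diff[OF this(2), of p \<beta> \<Lambda>]
  define a where "a = 2 * real p * (real p * (fst z + fst y) - \<beta> * v)"
  define b where "b = - 2 * (real p * \<beta> * u + (real p - 1) + \<beta> * \<Lambda>)"
  have "\<bar>fst z + fst y\<bar> \<le> 2 * R"
    using bounds abs_triangle_ineq[of "fst z" "fst y"] by linarith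
  then have "\<bar>real p * (fst z + fst y)\<bar> \<le> real p * (2 * R)"
    by (simp add: abs_mult mult_left_mono)
  moreover have "\<bar>\<beta> * v\<bar> \<le> \<beta> * R"
    using bounds \<open>0 \<le> \<beta>\<close> by (simp add: abs_mult mult_left_mono)
  ultimately have "\<bar>real p * (fst z + fst y) - \<beta> * v\<bar> \<le> real p * (2 * R) + \<beta> * R"
    by (meson abs_triangle_ineq4 add_mono order_trans)
  then have "2 * real p * \<bar>real p * (fst z + fst y) - \<beta> * v\<bar> \<le> 2 * real p * (real p * (2 * R) + \<beta> * R)"
    by (intro mult_left_mono) auto
  then have a_bound: "\<bar>a\<bar> \<le> 2 * real p * (2 * real p + \<beta>) * R"
    unfolding a_def abs_mult by (simp add: algebra_simps)
  have "\<bar>real p * \<beta> * u\<bar> \<le> real p * \<beta> * R" and "\<bar>\<beta> * \<Lambda>\<bar> \<le> \<beta> * L"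
    using \<open>\<bar>u\<bar> \<le> R\<close> \<open>\<bar>\<Lambda>\<bar> \<le> L\<close> \<open>0 \<le> \<beta>\<close> by (simp_all add: abs_mult mult_left_mono)
  then have b_bound: "\<bar>b\<bar> \<le> 2 * real p * \<beta> * R + 2 * \<beta> * L + 3 * real p + 2"
    unfolding b_def by (simp add: abs_le_iff)
  show ?thesis
  proof (rule rate_pos_at_boundary[where a = a and u = "fst z - fst y" and b = b and M = "2 * R"
        and c = "2 * real p * k" and A = "2 * real p * (2 * real p + \<beta>) * R + \<beta>"
        and B = "2 * real p * \<beta> * R + 2 * \<beta> * L + 3 * real p + 2"])
    show "a * (fst z - fst y) + b * (-d) \<le> D"
      using D gaps(2) unfolding diff a_def b_def by simp
    show "- (2 * real p * k * d) \<le> a"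
      using mult_left_mono[OF coeff, of "2 * real p"] unfolding a_def by simp
    show "fst z - fst y \<le> 2 * R"
      using bounds by (simp add: abs_le_iff)
    show "2 * real p * k * (2 * R) + (2 * real p * (2 * real p + \<beta>) * R + \<beta>)
        + (2 * real p * \<beta> * R + 2 * \<beta> * L + 3 * real p + 2) < K"
      using K unfolding gap_rate_def .
  qed (use gaps a_bound b_bound bounds \<open>0 < d\<close> \<open>0 \<le> \<beta>\<close> \<open>0 \<le> k\<close> in auto)
qed

lemma Vminus_slope_le: "x \<in> Vminus p \<beta> \<Longrightarrow> 0 < \<beta> \<Longrightarrow> \<beta> * snd x \<le> 2 * real p * fst x"
  unfolding Vminus_def by (cases x) (auto simp: pos_le_divide_eq mult.commute)

lemma closed_Vminus: "closed (Vminus p \<beta>)"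
proof -
  have "Vminus p \<beta> = {x. 0 \<le> fst x} \<inter> {x. 0 \<le> snd x} \<inter> {x. snd x \<le> (2 * real p / \<beta>) * fst x}"
    by (auto simp: Vminus_def)
  then show ?thesis
    by (simp only:) (intro closed_Int closed_Collect_le continuous_intros)
qed

lemma Basis_real_pair: "(Basis :: (real \<times> real) set) = {(1, 0), (0, 1)}"
  by (auto simp: Basis_prod_def)

text \<open>\<open>F2U\<close> is \<open>F2L\<close> with \<open>-\<Lambda>\<close>, so Condition I says that \<open>X\<close> is a supersolution for \<open>\<Lambda>\<close> and a
  subsolution for \<open>-\<Lambda>\<close>, while \<open>A_L\<close> and \<open>A_U\<close> are exact solutions for \<open>\<Lambda>\<close> and \<open>-\<Lambda>\<close>.\<close>
definition subsolution ::
    "nat \<Rightarrow> real \<Rightarrow> real \<Rightarrow> real \<Rightarrow> (real \<Rightarrow> real \<times> real) \<Rightarrow> (real \<Rightarrow> real \<times> real) \<Rightarrow> bool" where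
  "subsolution p \<beta> \<Lambda> T Y Y' \<longleftrightarrow> (\<forall>t\<in>{0..T}. (Y has_vector_derivative Y' t) (at t within {0..T})
     \<and> fst (Y' t) = F1 p \<beta> (Y t) \<and> snd (Y' t) \<le> F2L p \<beta> \<Lambda> (Y t))"

definition supersolution ::
    "nat \<Rightarrow> real \<Rightarrow> real \<Rightarrow> real \<Rightarrow> (real \<Rightarrow> real \<times> real) \<Rightarrow> (real \<Rightarrow> real \<times> real) \<Rightarrow> bool" where
  "supersolution p \<beta> \<Lambda> T Y Y' \<longleftrightarrow> (\<forall>t\<in>{0..T}. (Y has_vector_derivative Y' t) (at t within {0..T})
     \<and> fst (Y' t) = F1 p \<beta> (Y t) \<and> F2L p \<beta> \<Lambda> (Y t) \<le> snd (Y' t))"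

lemma gap_inward_rate:
  assumes "fst y' = F1 p \<beta> y" and "snd y' \<le> F2L p \<beta> \<Lambda> y"
    and "fst z' = F1 p \<beta> z" and "F2L p \<beta> \<Lambda> z \<le> snd z'"
    and "b \<in> Basis" and boundary: "(z - y) \<bullet> b = -d"
    and gap1: "-d \<le> fst z - fst y" and gap2: "-d \<le> snd z - snd y"
    and "norm y \<le> R" and "norm z \<le> R"
    and "v = snd y \<or> v = snd z" and "- (k * d) \<le> real p * (fst z + fst y) - \<beta> * v"
    and "0 < d" and "0 \<le> \<beta>" and "0 \<le> k" and "\<bar>\<Lambda>\<bar> \<le> L" and "gap_rate p \<beta> R k L < K"
  shows "0 < (z' - y') \<bullet> b + K * d"
proof -
  have bounds: "\<bar>fst y\<bar> \<le> R" "\<bar>snd y\<bar> \<le> R" "\<bar>fst z\<bar> \<le> R" "\<bar>snd z\<bar> \<le> R"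
    using assms(9,10) norm_fst_le[of "fst y" "snd y"] norm_snd_le[of "snd y" "fst y"]
      norm_fst_le[of "fst z" "snd z"] norm_snd_le[of "snd z" "fst z"] by auto
  from \<open>b \<in> Basis\<close> consider "b = (1, 0)" | "b = (0, 1)"
    by (auto simp: Basis_real_pair)
  then show ?thesis
  proof cases
    case 1
    then have "fst z - fst y = -d"
      using boundary by (simp add: inner_Pair_0)
    then have "0 < F1 p \<beta> z - F1 p \<beta> y + K * d"
      using gap2 bounds assms(13-) by (intro F1_gap_rate[where R = R and k = k and L = L]) auto
    then show ?thesis
      using assms(1,3) 1 by (simp add: inner_Pair_0)
  next
    case 2
    then have "snd z - snd y = -d"
      using boundary by (simp add: inner_Pair_0)
    moreover have "F2L p \<beta> \<Lambda> z - F2L p \<beta> \<Lambda> y \<le> (z' - y') \<bullet> b"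
      using assms(2,4) 2 by (simp add: inner_Pair_0)
    moreover have "\<bar>v\<bar> \<le> R"
      using bounds \<open>v = snd y \<or> v = snd z\<close> by auto
    ultimately show ?thesis
      using gap1 bounds assms(11-) by (intro F2L_gap_rate[where p = p and \<beta> = \<beta> and \<Lambda> = \<Lambda> and z = z and y = y and v = v
          and R = R and k = k and L = L]) auto
  qed
qed

lemma subsolution_le_supersolution:
  assumes "0 < \<beta>" and Y: "subsolution p \<beta> \<Lambda> T Y Y'" and Z: "supersolution p \<beta> \<Lambda> T Z Z'"
    and "fst (Y 0) \<le> fst (Z 0)" and "snd (Y 0) \<le> snd (Z 0)"
    and "t \<in> {0..T}" and YV: "\<And>s. s \<in> {0..t} \<Longrightarrow> Y s \<in> Vminus p \<beta>"
  shows "fst (Y t) \<le> fst (Z t) \<and> snd (Y t) \<le> snd (Z t)"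
proof -
  have dY: "\<And>s. s \<in> {0..T} \<Longrightarrow> (Y has_vector_derivative Y' s) (at s within {0..T})"
    and dZ: "\<And>s. s \<in> {0..T} \<Longrightarrow> (Z has_vector_derivative Z' s) (at s within {0..T})"
    using Y Z unfolding subsolution_def supersolution_def by blast+
  have "continuous_on {0..T} (\<lambda>s. (Y s, Z s))"
    using dY dZ by (intro continuous_on_Pair has_vector_derivative_imp_continuous_on)
  then have "bounded ((\<lambda>s. (Y s, Z s)) ` {0..T})"
    by (intro compact_imp_bounded compact_continuous_image compact_Icc)
  then obtain R where R: "\<forall>s\<in>{0..T}. norm (Y s, Z s) \<le> R"
    unfolding bounded_iff by auto
  define K where "K = gap_rate p \<beta> R (real p) \<bar>\<Lambda>\<bar> + 1"
  have "\<forall>b\<in>Basis. \<forall>s\<in>{0..t}. 0 \<le> (Z s - Y s) \<bullet> b"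
  proof (rule componentwise_nonneg_preserved[where K = K])
    show "((\<lambda>r. (Z r - Y r) \<bullet> b) has_real_derivative (Z' s - Y' s) \<bullet> b) (at s within {0..t})"
      if "s \<in> {0..t}" for b s
      using \<open>t \<in> {0..T}\<close> that dY dZ
      by (intro has_real_derivative_component_within[where T = T]) (auto intro: has_vector_derivative_diff)
  next
    fix d s and b :: "real \<times> real"
    assume "0 < d" and s: "s \<in> {0<..t}" and "b \<in> Basis"
      and gaps: "\<forall>c\<in>Basis. -d \<le> (Z s - Y s) \<bullet> c" and boundary: "(Z s - Y s) \<bullet> b = -d"
    have "s \<in> {0..T}"
      using s \<open>t \<in> {0..T}\<close> by auto
    have gap1: "-d \<le> fst (Z s) - fst (Y s)" and gap2: "-d \<le> snd (Z s) - snd (Y s)"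
      using gaps by (simp_all add: Basis_real_pair inner_Pair_0)
    have "\<beta> * snd (Y s) \<le> 2 * real p * fst (Y s)"
      using YV s \<open>0 < \<beta>\<close> by (intro Vminus_slope_le) auto
    moreover have "real p * (-d) \<le> real p * (fst (Z s) - fst (Y s))"
      using gap1 by (intro mult_left_mono) auto
    ultimately have "- (real p * d) \<le> real p * (fst (Z s) + fst (Y s)) - \<beta> * snd (Y s)"
      by (simp add: algebra_simps)
    then show "0 < (Z' s - Y' s) \<bullet> b + K * d"
      using Y Z \<open>s \<in> {0..T}\<close> \<open>b \<in> Basis\<close> boundary gap1 gap2 \<open>0 < d\<close> \<open>0 < \<beta>\<close>
        bspec[OF R \<open>s \<in> {0..T}\<close>] norm_fst_le[of "Y s" "Z s"] norm_snd_le[of "Z s" "Y s"]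
      unfolding subsolution_def supersolution_def K_def
      by (intro gap_inward_rate[where p = p and \<beta> = \<beta> and \<Lambda> = \<Lambda> and y = "Y s" and z = "Z s"
            and v = "snd (Y s)" and R = R and k = "real p" and L = "\<bar>\<Lambda>\<bar>"]) auto
  qed (use \<open>t \<in> {0..T}\<close> \<open>fst (Y 0) \<le> fst (Z 0)\<close> \<open>snd (Y 0) \<le> snd (Z 0)\<close> in
      \<open>auto simp: Basis_real_pair inner_Pair_0\<close>)
  then show ?thesis
    using \<open>t \<in> {0..T}\<close> by (simp add: Basis_real_pair inner_Pair_0)
qed

lemma sandwich_inward_rate:
  assumes Y': "fst y' = F1 p \<beta> y" "snd y' \<le> F2L p \<beta> \<Lambda>\<^sub>1 y"
    and X': "fst x' = F1 p \<beta> x" "F2L p \<beta> \<Lambda>\<^sub>1 x \<le> snd x'" "snd x' \<le> F2L p \<beta> \<Lambda>\<^sub>2 x"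
    and W': "fst w' = F1 p \<beta> w" "F2L p \<beta> \<Lambda>\<^sub>2 w \<le> snd w'"
    and gaps: "\<forall>c\<in>Basis. -d \<le> (x - y, w - x) \<bullet> c"
    and "b \<in> Basis" and boundary: "(x - y, w - x) \<bullet> b = -d"
    and norms: "norm y \<le> R" "norm x \<le> R" "norm w \<le> R"
    and slope: "\<beta> * snd w \<le> 2 * real p * fst y"
    and "0 < d" and "0 < \<beta>" and K: "gap_rate p \<beta> R (3 * real p + \<beta>) (\<bar>\<Lambda>\<^sub>1\<bar> + \<bar>\<Lambda>\<^sub>2\<bar>) < K"
  shows "0 < (x' - y', w' - x') \<bullet> b + K * d"
proof -
  define k where "k = 3 * real p + \<beta>"
  have "-d \<le> (x - y) \<bullet> c" and "-d \<le> (w - x) \<bullet> c" if "c \<in> Basis" for c :: "real \<times> real"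
  proof -
    have "(c, 0) \<in> Basis" and "(0, c) \<in> Basis"
      using that by (auto simp: Basis_prod_def)
    then show "-d \<le> (x - y) \<bullet> c" and "-d \<le> (w - x) \<bullet> c"
      using gaps by (force simp: inner_Pair_0)+
  qed
  from this[of "(1, 0)"] this[of "(0, 1)"]
  have gap1: "-d \<le> fst x - fst y" and gap2: "-d \<le> snd x - snd y"
    and gap3: "-d \<le> fst w - fst x" and gap4: "-d \<le> snd w - snd x"
    by (simp_all add: Basis_real_pair inner_Pair_0)
  \<comment> \<open>Only the corner \<open>(fst y, snd w)\<close> lies in \<open>V_-\<close>; the gaps transport its slope bound to both cross coefficients.\<close>
  have "real p * (-d) \<le> real p * (fst x - fst y)" and "real p * (-d) \<le> real p * (fst w - fst x)"
    using gap1 gap3 by (intro mult_left_mono; simp)+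
  moreover have "\<beta> * (-d) \<le> \<beta> * (snd w - snd x)"
    using gap4 \<open>0 < \<beta>\<close> by (intro mult_left_mono) auto
  moreover have "0 \<le> real p * d" and "0 \<le> \<beta> * d"
    using \<open>0 < d\<close> \<open>0 < \<beta>\<close> by simp_all
  ultimately have coeff_x: "- (k * d) \<le> real p * (fst x + fst y) - \<beta> * snd x"
    and coeff_w: "- (k * d) \<le> real p * (fst w + fst x) - \<beta> * snd w"
    using slope unfolding k_def by (simp_all add: algebra_simps)
  have "0 \<le> k"
    using \<open>0 < \<beta>\<close> unfolding k_def by simp
  from \<open>b \<in> Basis\<close> obtain c where "c \<in> Basis" and "b = (c, 0) \<or> b = (0, c)"
    by (auto simp: Basis_prod_def)
  then consider "b = (c, 0)" | "b = (0, c)"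
    by blast
  then show ?thesis
  proof cases
    case 1
    have "0 < (x' - y') \<bullet> c + K * d"
      using Y' X' \<open>c \<in> Basis\<close> boundary 1 gap1 gap2 norms coeff_x \<open>0 < d\<close> \<open>0 < \<beta>\<close> \<open>0 \<le> k\<close> K
      unfolding k_def
      by (intro gap_inward_rate[where p = p and \<beta> = \<beta> and \<Lambda> = "\<Lambda>\<^sub>1" and y = y and z = x and v = "snd x"
            and R = R and k = k and L = "\<bar>\<Lambda>\<^sub>1\<bar> + \<bar>\<Lambda>\<^sub>2\<bar>"]) (auto simp: inner_Pair_0 k_def)
    then show ?thesis
      using 1 by (simp add: inner_Pair_0)
  next
    case 2
    have "0 < (w' - x') \<bullet> c + K * d"
      using X' W' \<open>c \<in> Basis\<close> boundary 2 gap3 gap4 norms coeff_w \<open>0 < d\<close> \<open>0 < \<beta>\<close> \<open>0 \<le> k\<close> K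
      unfolding k_def
      by (intro gap_inward_rate[where p = p and \<beta> = \<beta> and \<Lambda> = "\<Lambda>\<^sub>2" and y = x and z = w and v = "snd w"
            and R = R and k = k and L = "\<bar>\<Lambda>\<^sub>1\<bar> + \<bar>\<Lambda>\<^sub>2\<bar>"]) (auto simp: inner_Pair_0 k_def)
    then show ?thesis
      using 2 by (simp add: inner_Pair_0)
  qed
qed

lemma sandwich_between_sub_and_supersolutions:
  assumes "0 < \<beta>"
    and Y: "subsolution p \<beta> \<Lambda>\<^sub>1 T Y Y'"
    and X: "supersolution p \<beta> \<Lambda>\<^sub>1 T X X'" "subsolution p \<beta> \<Lambda>\<^sub>2 T X X'"
    and W: "supersolution p \<beta> \<Lambda>\<^sub>2 T W W'"
    and "fst (Y 0) \<le> fst (X 0)" and "snd (Y 0) \<le> snd (X 0)"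
    and "fst (X 0) \<le> fst (W 0)" and "snd (X 0) \<le> snd (W 0)"
    and "t \<in> {0..T}" and YWV: "\<And>s. s \<in> {0..t} \<Longrightarrow> (fst (Y s), snd (W s)) \<in> Vminus p \<beta>"
  shows "fst (Y t) \<le> fst (X t) \<and> snd (Y t) \<le> snd (X t) \<and> fst (X t) \<le> fst (W t) \<and> snd (X t) \<le> snd (W t)"
proof -
  have dY: "\<And>s. s \<in> {0..T} \<Longrightarrow> (Y has_vector_derivative Y' s) (at s within {0..T})"
    and dX: "\<And>s. s \<in> {0..T} \<Longrightarrow> (X has_vector_derivative X' s) (at s within {0..T})"
    and dW: "\<And>s. s \<in> {0..T} \<Longrightarrow> (W has_vector_derivative W' s) (at s within {0..T})"
    using Y X W unfolding subsolution_def supersolution_def by blast+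
  have "continuous_on {0..T} (\<lambda>s. (Y s, X s, W s))"
    using dY dX dW by (intro continuous_on_Pair has_vector_derivative_imp_continuous_on)
  then have "bounded ((\<lambda>s. (Y s, X s, W s)) ` {0..T})"
    by (intro compact_imp_bounded compact_continuous_image compact_Icc)
  then obtain R where R: "\<forall>s\<in>{0..T}. norm (Y s, X s, W s) \<le> R"
    unfolding bounded_iff by auto
  have norms: "norm (Y s) \<le> R" "norm (X s) \<le> R" "norm (W s) \<le> R" if "s \<in> {0..T}" for s
    using bspec[OF R that] norm_fst_le[of "Y s" "(X s, W s)"] norm_snd_le[of "(X s, W s)" "Y s"]
      norm_fst_le[of "X s" "W s"] norm_snd_le[of "W s" "X s"] by linarith+
  define K where "K = gap_rate p \<beta> R (3 * real p + \<beta>) (\<bar>\<Lambda>\<^sub>1\<bar> + \<bar>\<Lambda>\<^sub>2\<bar>) + 1"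
  have "\<forall>b\<in>Basis. \<forall>s\<in>{0..t}. 0 \<le> (X s - Y s, W s - X s) \<bullet> b"
  proof (rule componentwise_nonneg_preserved[where K = K])
    show "((\<lambda>r. (X r - Y r, W r - X r) \<bullet> b) has_real_derivative (X' s - Y' s, W' s - X' s) \<bullet> b)
        (at s within {0..t})" if "s \<in> {0..t}" for b s
      using \<open>t \<in> {0..T}\<close> that dY dX dW
      by (intro has_real_derivative_component_within[where T = T])
        (auto intro!: has_vector_derivative_Pair has_vector_derivative_diff)
  next
    fix d s and b :: "(real \<times> real) \<times> (real \<times> real)"
    assume "0 < d" and s: "s \<in> {0<..t}" and "b \<in> Basis"
      and "\<forall>c\<in>Basis. -d \<le> (X s - Y s, W s - X s) \<bullet> c" and "(X s - Y s, W s - X s) \<bullet> b = -d"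
    moreover have "s \<in> {0..T}"
      using s \<open>t \<in> {0..T}\<close> by auto
    moreover have "\<beta> * snd (W s) \<le> 2 * real p * fst (Y s)"
      using Vminus_slope_le[OF YWV \<open>0 < \<beta>\<close>] s by auto
    ultimately show "0 < (X' s - Y' s, W' s - X' s) \<bullet> b + K * d"
      using Y X W norms \<open>0 < \<beta>\<close> unfolding subsolution_def supersolution_def K_def
      by (intro sandwich_inward_rate[where p = p and \<beta> = \<beta> and \<Lambda>\<^sub>1 = "\<Lambda>\<^sub>1" and \<Lambda>\<^sub>2 = "\<Lambda>\<^sub>2"
            and y = "Y s" and x = "X s" and w = "W s" and y' = "Y' s" and x' = "X' s" and w' = "W' s" and R = R])
        auto
  qed (use \<open>t \<in> {0..T}\<close> assms(6-9) in \<open>auto simp: Basis_prod_def Basis_real_pair inner_Pair_0\<close>)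
  then have "\<forall>c\<in>Basis. 0 \<le> (X t - Y t) \<bullet> c \<and> 0 \<le> (W t - X t) \<bullet> c"
    using \<open>t \<in> {0..T}\<close> by (auto simp: Basis_prod_def inner_Pair_0)
  then show ?thesis
    by (simp add: Basis_real_pair inner_Pair_0)
qed

theorem mainTheorem18:
  fixes p :: nat and \<beta> \<Lambda> T :: real
    and X X' AL AU :: "real \<Rightarrow> real \<times> real"
  assumes p: "p \<ge> 3" and beta: "\<beta> > 0" and Lam: "\<Lambda> > 0" and T: "0 \<le> T"
    and Xderiv: "\<And>t. t \<in> {0..T} \<Longrightarrow> (X has_vector_derivative X' t) (at t within {0..T})"
    and Xcont: "continuous_on {0..T} X'"
    and cond1: "\<And>t. t \<in> {0..T} \<Longrightarrow> fst (X' t) = F1 p \<beta> (X t)"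
    and cond2L: "\<And>t. t \<in> {0..T} \<Longrightarrow> F2L p \<beta> \<Lambda> (X t) \<le> snd (X' t)"
    and cond2U: "\<And>t. t \<in> {0..T} \<Longrightarrow> snd (X' t) \<le> F2U p \<beta> \<Lambda> (X t)"
    and X0: "X 0 \<in> interior (Vminus p \<beta>)"
    and ALode: "\<And>t. t \<in> {0..T} \<Longrightarrow>
       (AL has_vector_derivative (F1 p \<beta> (AL t), F2L p \<beta> \<Lambda> (AL t))) (at t within {0..T})"
    and AL0: "AL 0 = X 0"
    and AUode: "\<And>t. t \<in> {0..T} \<Longrightarrow>
       (AU has_vector_derivative (F1 p \<beta> (AU t), F2U p \<beta> \<Lambda> (AU t))) (at t within {0..T})"
    and AU0: "AU 0 = X 0"
  shows
    "(\<forall>t \<in> {0..T}. ereal t \<le> min (hit_time AL (- Vminus p \<beta>) T) (hit_time X (- Vminus p \<beta>) T)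
        \<longrightarrow> fst (AL t) \<le> fst (X t) \<and> snd (AL t) \<le> snd (X t))
   \<and> (\<forall>t \<in> {0..T}. ereal t \<le> min (hit_time AU (- Vminus p \<beta>) T) (hit_time X (- Vminus p \<beta>) T)
        \<longrightarrow> fst (X t) \<le> fst (AU t) \<and> snd (X t) \<le> snd (AU t))
   \<and> (\<forall>t \<in> {0..T}. ereal t \<le> hit_time (\<lambda>s. (fst (AL s), snd (AU s))) (- Vminus p \<beta>) T
        \<longrightarrow> fst (AL t) \<le> fst (X t) \<and> snd (AL t) \<le> snd (X t)
          \<and> fst (X t) \<le> fst (AU t) \<and> snd (X t) \<le> snd (AU t))
   \<and> (hit_time (\<lambda>s. (fst (AL s), snd (AU s))) (- Vminus p \<beta>) T = \<infinity>
        \<longrightarrow> (\<forall>t \<in> {0..T}. fst (AL t) \<le> fst (X t) \<and> snd (AL t) \<le> snd (X t)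
          \<and> fst (X t) \<le> fst (AU t) \<and> snd (X t) \<le> snd (AU t)))"
proof -
  have V0: "X 0 \<in> Vminus p \<beta>"
    using X0 interior_subset by blast
  have X_super: "supersolution p \<beta> \<Lambda> T X X'"
    unfolding supersolution_def using Xderiv cond1 cond2L by blast
  have X_sub: "subsolution p \<beta> (- \<Lambda>) T X X'"
    unfolding subsolution_def F2U_eq_F2L_neg[symmetric] using Xderiv cond1 cond2U by blast
  have AL_sub: "subsolution p \<beta> \<Lambda> T AL (\<lambda>t. (F1 p \<beta> (AL t), F2L p \<beta> \<Lambda> (AL t)))"
    unfolding subsolution_def using ALode by simp
  have AU_super: "supersolution p \<beta> (- \<Lambda>) T AU (\<lambda>t. (F1 p \<beta> (AU t), F2U p \<beta> \<Lambda> (AU t)))"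
    unfolding supersolution_def F2U_eq_F2L_neg[symmetric] using AUode by simp
  have cont: "continuous_on {0..T} AL" "continuous_on {0..T} X" "continuous_on {0..T} AU"
    using has_vector_derivative_imp_continuous_on[OF ALode] has_vector_derivative_imp_continuous_on[OF Xderiv]
      has_vector_derivative_imp_continuous_on[OF AUode] by simp_all
  then have cont_corner: "continuous_on {0..T} (\<lambda>s. (fst (AL s), snd (AU s)))"
    by (intro continuous_on_Pair continuous_on_fst continuous_on_snd)
  note before_exit = mem_before_hit_time[OF _ closed_Vminus]
  have "fst (AL t) \<le> fst (X t) \<and> snd (AL t) \<le> snd (X t)"
    if "t \<in> {0..T}" and "ereal t \<le> hit_time AL (- Vminus p \<beta>) T" for t
    using that before_exit[OF cont(1)] AL0 V0 by (intro subsolution_le_supersolution[OF beta AL_sub X_super]) auto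
  moreover have "fst (X t) \<le> fst (AU t) \<and> snd (X t) \<le> snd (AU t)"
    if "t \<in> {0..T}" and "ereal t \<le> hit_time X (- Vminus p \<beta>) T" for t
    using that before_exit[OF cont(2)] AU0 V0 by (intro subsolution_le_supersolution[OF beta X_sub AU_super]) auto
  moreover have "fst (AL t) \<le> fst (X t) \<and> snd (AL t) \<le> snd (X t) \<and> fst (X t) \<le> fst (AU t) \<and> snd (X t) \<le> snd (AU t)"
    if "t \<in> {0..T}" and "ereal t \<le> hit_time (\<lambda>s. (fst (AL s), snd (AU s))) (- Vminus p \<beta>) T" for t
    using that before_exit[OF cont_corner] AL0 AU0 V0
    by (intro sandwich_between_sub_and_supersolutions[OF beta AL_sub X_super X_sub AU_super]) auto
  ultimately show ?thesis
    by simp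
qed

end
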